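(* Let $(X,d)$ be a separable metric space admitting a weak convergence, and let $p\ge 1$. Suppose that $\{\mu_n\}_{n\in\mathbb{N}}$ and $\mu$ in $\mathcal{P}_{p-1}(X)$ satisfy $\mu_n\to\mu$ in $\tau_{\mathrm{w}}^{p-1}$, and suppose that non-negative real numbers $\{\varepsilon_n\}_{n\in\mathbb{N}}$ satisfy $\varepsilon_n\to 0$. Then, for any sequence $\{x_n\}_{n\in\mathbb{N}}$ in $X$ with $x_n\in M_p(\mu_n;\varepsilon_n)$ for all $n\in\mathbb{N}$, the sequence $\{x_n\}_{n\in\mathbb{N}}$ is relatively $d$-compact (every subsequence has a further subsequence converging in $d$) and any $d$-subsequential limit of it lies in $M_p(\mu)$.
   Context: A convergence $c$ on a set $X$ is a rule assigning at most one point of $X$ as the "limit" of each sequence in $X$, such that whenever a sequence has limit $x$, every subsequence also has limit $x$; we write $x_n\to x$ in $c$. A convergence $w$ on $X$ is a weak convergence for the metric space $(X,d)$ if: (W1) whenever $\{x_n\}$ and $y$ in $X$ satisfy $\sup_n d(x_n,y)<\infty$, there are a subsequence $\{n_k\}$ and $x\in X$ with $x_{n_k}\to x$ in $w$; (W2) whenever $x_n\to x$ in $w$, then $d(x,y)\le\liminf_n d(x_n,y)$ for all $y\in X$; (W3) whenever $x_n\to x$ in $w$ and $d(x_n,y)\to d(x,y)$ for some $y\in X$, then $d(x_n,x)\to 0$. $(X,d)$ admits a weak convergence if such a $w$ exists. For $r\ge 0$, $\mathcal{P}_r(X)$ is the set of Borel probability measures $\mu$ on $(X,d)$ with $\int_X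 d^r(x,y)\,d\mu(y)<\infty$ for some (equivalently all) $x\in X$. We write $\mu_n\to\mu$ in $\tau_{\mathrm{w}}^{r}$ if $\int f\,d\mu_n\to\int f\,d\mu$ for every bounded continuous $f:(X,d)\to\mathbb{R}$ and $\int_X d^r(x,y)\,d\mu_n(y)\to\int_X d^r(x,y)\,d\mu(y)$ for all $x\in X$. For $p\ge1$ and $\mu\in\mathcal{P}_{p-1}(X)$ define $W_p(\mu,x,x'):=\int_X (d^p(x,y)-d^p(x',y))\,d\mu(y)$ (well defined), and for $\varepsilon\ge0$ define $M_p(\mu;\varepsilon):=\{x\in X: W_p(\mu,x,x')\le\varepsilon \text{ for all } x'\in X\}$ and the Fréchet $p$-mean set $M_p(\mu):=M_p(\mu;0)$. *)

theory Defs
  imports "HOL-Probability.Probability"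
begin

text \<open>Real power with the convention t^0 = 1 (also for t = 0), as in d^r with r = p - 1 >= 0.\<close>
definition rpow :: "real \<Rightarrow> real \<Rightarrow> real" where
  "rpow t r = (if r = 0 then 1 else t powr r)"

definition is_convergence :: "((nat \<Rightarrow> 'a) \<Rightarrow> 'a \<Rightarrow> bool) \<Rightarrow> bool" where
  "is_convergence c \<longleftrightarrow>
     (\<forall>xs x y. c xs x \<and> c xs y \<longrightarrow> x = y) \<and>
     (\<forall>xs x s. c xs x \<and> strict_mono s \<longrightarrow> c (xs \<circ> s) x)"

definition is_weak_convergence :: "((nat \<Rightarrow> 'a::metric_space) \<Rightarrow> 'a \<Rightarrow> bool) \<Rightarrow> bool" where
  "is_weak_convergence w \<longleftrightarrow> is_convergence w \<and>
     (\<forall>(xs::nat \<Rightarrow> 'a) (y::'a). bdd_above (range (\<lambda>n. dist (xs n) y)) \<longrightarrow>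
        (\<exists>(s::nat \<Rightarrow> nat) (x::'a). strict_mono s \<and> w (xs \<circ> s) x)) \<and>
     (\<forall>(xs::nat \<Rightarrow> 'a) (x::'a). w xs x \<longrightarrow>
        (\<forall>y::'a. ereal (dist x y) \<le> liminf (\<lambda>n. ereal (dist (xs n) y)))) \<and>
     (\<forall>(xs::nat \<Rightarrow> 'a) (x::'a) (y::'a). w xs x \<and> (\<lambda>n. dist (xs n) y) \<longlonglongrightarrow> dist x y \<longrightarrow>
        (\<lambda>n. dist (xs n) x) \<longlonglongrightarrow> 0)"

definition admits_weak_convergence :: "'a::metric_space itself \<Rightarrow> bool" where
  "admits_weak_convergence _ \<longleftrightarrow> (\<exists>w::(nat \<Rightarrow> 'a) \<Rightarrow> 'a \<Rightarrow> bool. is_weak_convergence w)"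

definition Prob_r :: "real \<Rightarrow> 'a::metric_space measure set" where
  "Prob_r r = {M. prob_space M \<and> sets M = sets borel \<and>
                  (\<exists>x. integrable M (\<lambda>y. rpow (dist x y) r))}"

definition conv_wr :: "real \<Rightarrow> (nat \<Rightarrow> 'a::metric_space measure) \<Rightarrow> 'a measure \<Rightarrow> bool" where
  "conv_wr r Ms M \<longleftrightarrow>
     (\<forall>f::'a \<Rightarrow> real. continuous_on UNIV f \<and> bounded (range f) \<longrightarrow>
        (\<lambda>n. integral\<^sup>L (Ms n) f) \<longlonglongrightarrow> integral\<^sup>L M f) \<and>
     (\<forall>x. (\<lambda>n. integral\<^sup>L (Ms n) (\<lambda>y. rpow (dist x y) r)) \<longlonglongrightarrow>
            integral\<^sup>L M (\<lambda>y. rpow (dist x y) r))"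

definition Wp :: "'a::metric_space measure \<Rightarrow> real \<Rightarrow> 'a \<Rightarrow> 'a \<Rightarrow> real" where
  "Wp M p x x' = integral\<^sup>L M (\<lambda>y. dist x y powr p - dist x' y powr p)"

definition Mp_eps :: "'a::metric_space measure \<Rightarrow> real \<Rightarrow> real \<Rightarrow> 'a set" where
  "Mp_eps M p \<epsilon> = {x. \<forall>x'. Wp M p x x' \<le> \<epsilon>}"

definition Mp :: "'a::metric_space measure \<Rightarrow> real \<Rightarrow> 'a set" where
  "Mp M p = Mp_eps M p 0"

end

theory Submission
  imports Defs
begin

text \<open>
  Two estimates drive the proof. First, |d(a,y)^p - d(b,y)^p| grows at most like 1 + d(b,y)^(p-1),
  and convergence in tau_w^(p-1) gives convergence of the integrals of all continuous functions
  of this growth (truncate, and control the error by the growth bound). Hence W_p(mu_n, -, x')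
  is continuous along d-convergent sequences, and d-limits of approximate p-means are p-means.

  For relative compactness: the tails of the mu_n are uniformly small, so W_p(mu_n, x, o) is at
  least d(x, o)/2 - C for x far away from o, and approximate p-means are bounded. By (W1) a
  subsequence z_n converges weakly to some x, and by (W2) h(y) = liminf d(z_n, y) >= d(x, y).
  Using separability, the 1-Lipschitz function h is the pointwise limit of continuous functions
  each of which lies below d(z_n, -) for all large n. Testing W_p(mu_n, z_n, x) <= eps_n with
  them gives Int (h^p - d(x, -)^p) dmu <= 0, so h(y) = d(x, y) for some y. Along a subsequence
  d(z_n, y) tends to d(x, y), and (W3) turns this into d(z_n, x) -> 0.
\<close>

section \<open>Real powers\<close>

lemma rpow_nonneg: "0 \<le> t \<Longrightarrow> 0 \<le> rpow t r"
  by (simp add: rpow_def)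

lemma rpow_mono: "0 \<le> s \<Longrightarrow> s \<le> t \<Longrightarrow> 0 \<le> r \<Longrightarrow> rpow s r \<le> rpow t r"
  by (simp add: rpow_def powr_mono2)

lemma rpow_add_le:
  assumes "0 \<le> s" "0 \<le> t" "0 \<le> r"
  shows "rpow (s + t) r \<le> 2 powr r * (rpow s r + rpow t r)"
proof (cases "r = 0")
  case True
  then show ?thesis by (simp add: rpow_def)
next
  case False
  have "(s + t) powr r \<le> (2 * max s t) powr r"
    using assms by (intro powr_mono2) auto
  also have "\<dots> = 2 powr r * max s t powr r"
    using assms by (simp add: powr_mult)
  also have "\<dots> \<le> 2 powr r * (s powr r + t powr r)"
    by (intro mult_left_mono) (auto simp: max_def)
  finally show ?thesis
    using False by (simp add: rpow_def)
qed

lemma mult_rpow_eq_powr: "0 \<le> t \<Longrightarrow> 1 \<le> p \<Longrightarrow> t * rpow t (p - 1) = t powr p"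
  by (cases "t = 0") (auto simp: rpow_def powr_mult_base)

lemma continuous_on_rpow:
  fixes f :: "'a::topological_space \<Rightarrow> real"
  assumes "continuous_on UNIV f" "\<And>y. 0 \<le> f y" "0 \<le> r"
  shows "continuous_on UNIV (\<lambda>y. rpow (f y) r)"
  using assms by (cases "r = 0") (auto simp: rpow_def intro!: continuous_on_powr')

lemma continuous_on_powr_const:
  fixes f :: "'a::topological_space \<Rightarrow> real"
  assumes "continuous_on UNIV f" "\<And>y. 0 \<le> f y" "0 < r"
  shows "continuous_on UNIV (\<lambda>y. f y powr r)"
  using assms by (auto intro!: continuous_on_powr')

lemma powr_ge_tangent:
  fixes a b p :: real
  assumes "0 \<le> a" "0 \<le> b" "1 \<le> p"
  shows "p * rpow b (p - 1) * (a - b) \<le> a powr p - b powr p"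
proof -
  consider "b = 0" | "a = 0" "b > 0" | "a > 0" "b > 0"
    using assms by linarith
  then show ?thesis
  proof cases
    case 1
    then show ?thesis
      using assms by (cases "p = 1") (auto simp: rpow_def)
  next
    case 2
    have "b powr p \<le> p * b powr p"
      using 2 assms by simp
    then show ?thesis
      using 2 assms mult_rpow_eq_powr[of b p] by (simp add: algebra_simps)
  next
    case 3
    have "rpow b (p - 1) = b powr (p - 1)"
      using 3 by (simp add: rpow_def)
    moreover have "p * b powr (p - 1) * (a - b) \<le> a powr p - b powr p"
      using 3 assms
      by (intro convex_on_imp_above_tangent[where A = "{0<..}"] powr_convex
          DERIV_subset[OF has_real_derivative_powr]) (auto simp: interior_open)
    ultimately show ?thesis by simp
  qed
qed

lemma powr_diff_abs_le:
  fixes a b p :: real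
  assumes "0 \<le> a" "0 \<le> b" "1 \<le> p"
  shows "\<bar>a powr p - b powr p\<bar> \<le> p * \<bar>a - b\<bar> * (rpow a (p - 1) + rpow b (p - 1))"
proof -
  define u v where "u = p * rpow a (p - 1)" and "v = p * rpow b (p - 1)"
  have "v * (a - b) \<le> a powr p - b powr p" "a powr p - b powr p \<le> u * (a - b)"
    using powr_ge_tangent[of a b p] powr_ge_tangent[of b a p] assms
    by (auto simp: u_def v_def algebra_simps)
  moreover have "\<bar>u * (a - b)\<bar> \<le> (u + v) * \<bar>a - b\<bar>" "\<bar>v * (a - b)\<bar> \<le> (u + v) * \<bar>a - b\<bar>"
    using assms by (auto simp: u_def v_def abs_mult rpow_nonneg intro!: mult_right_mono)
  ultimately show ?thesis
    by (auto simp: u_def v_def abs_le_iff algebra_simps)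
qed

lemma powr_diff_abs_le_growth:
  fixes a b p D :: real
  assumes "0 \<le> a" "0 \<le> b" "\<bar>a - b\<bar> \<le> D" "1 \<le> p"
  shows "\<bar>a powr p - b powr p\<bar> \<le>
    p * 2 powr (p - 1) * D powr p + p * (1 + 2 powr (p - 1)) * D * rpow b (p - 1)"
proof -
  have D: "0 \<le> D"
    using assms(3) by linarith
  have "rpow a (p - 1) \<le> rpow (b + D) (p - 1)"
    using assms by (intro rpow_mono) auto
  also have "\<dots> \<le> 2 powr (p - 1) * (rpow b (p - 1) + rpow D (p - 1))"
    using assms D by (intro rpow_add_le) auto
  finally have "p * \<bar>a - b\<bar> * (rpow a (p - 1) + rpow b (p - 1))
      \<le> p * D * (2 powr (p - 1) * (rpow b (p - 1) + rpow D (p - 1)) + rpow b (p - 1))"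
    using assms by (intro mult_mono) (auto simp: rpow_nonneg)
  also have "\<dots> = p * 2 powr (p - 1) * (D * rpow D (p - 1)) + p * (1 + 2 powr (p - 1)) * D * rpow b (p - 1)"
    by (simp add: algebra_simps)
  finally show ?thesis
    using powr_diff_abs_le[OF assms(1,2,4)] mult_rpow_eq_powr[OF D assms(4)] by simp
qed

lemma dist_powr_diff_abs_le:
  fixes a b y :: "'a::metric_space"
  assumes "1 \<le> p"
  shows "\<bar>dist a y powr p - dist b y powr p\<bar> \<le>
    p * 2 powr (p - 1) * dist a b powr p + p * (1 + 2 powr (p - 1)) * dist a b * rpow (dist b y) (p - 1)"
proof (rule powr_diff_abs_le_growth)
  show "\<bar>dist a y - dist b y\<bar> \<le> dist a b"
    by metric
qed (use assms in auto)

section \<open>Integrals of functions of polynomial growth\<close>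

lemma borel_measurable_continuous_on_sets_borel:
  fixes f :: "'a::topological_space \<Rightarrow> real"
  assumes "sets M = sets borel" "continuous_on UNIV f"
  shows "f \<in> borel_measurable M"
  by (subst measurable_cong_sets[OF assms(1) refl]) (rule borel_measurable_continuous_onI[OF assms(2)])

lemma Prob_rD:
  assumes "M \<in> Prob_r r"
  shows "prob_space M" "sets M = sets borel"
  using assms by (auto simp: Prob_r_def)

lemma Prob_r_integrable_rpow_dist:
  fixes M :: "'a::metric_space measure"
  assumes "M \<in> Prob_r r" "0 \<le> r"
  shows "integrable M (\<lambda>y. rpow (dist x y) r)"
proof -
  obtain x' where x': "integrable M (\<lambda>y. rpow (dist x' y) r)"
    using assms(1) by (auto simp: Prob_r_def)
  interpret prob_space M
    using Prob_rD[OF assms(1)] by blast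
  show ?thesis
  proof (rule Bochner_Integration.integrable_bound)
    show "integrable M (\<lambda>y. 2 powr r * (rpow (dist x x') r + rpow (dist x' y) r))"
      using x' by auto
    show "(\<lambda>y. rpow (dist x y) r) \<in> borel_measurable M"
      using assms by (intro borel_measurable_continuous_on_sets_borel Prob_rD continuous_on_rpow
          continuous_intros) auto
    have "rpow (dist x y) r \<le> rpow (dist x x' + dist x' y) r" for y
      using assms(2) by (intro rpow_mono dist_triangle) auto
    also have "\<dots> y \<le> 2 powr r * (rpow (dist x x') r + rpow (dist x' y) r)" for y
      using assms(2) by (intro rpow_add_le) auto
    finally have "rpow (dist x y) r \<le> 2 powr r * (rpow (dist x x') r + rpow (dist x' y) r)" for y .
    then show "AE y in M. norm (rpow (dist x y) r) \<le> norm (2 powr r * (rpow (dist x x') r + rpow (dist x' y) r))"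
      by (intro AE_I2) (auto simp: rpow_nonneg)
  qed
qed

lemma Prob_r_integrable_growth:
  fixes M :: "'a::metric_space measure" and f :: "'a \<Rightarrow> real"
  assumes "M \<in> Prob_r r" "0 \<le> r" "continuous_on UNIV f"
    and "\<And>y. \<bar>f y\<bar> \<le> \<alpha> + \<beta> * rpow (dist x y) r"
  shows "integrable M f"
proof (rule Bochner_Integration.integrable_bound)
  interpret prob_space M
    using Prob_rD[OF assms(1)] by blast
  show "integrable M (\<lambda>y. \<alpha> + \<beta> * rpow (dist x y) r)"
    using Prob_r_integrable_rpow_dist[OF assms(1,2)] by auto
  show "f \<in> borel_measurable M"
    using Prob_rD(2)[OF assms(1)] assms(3) by (rule borel_measurable_continuous_on_sets_borel)
  show "AE y in M. norm (f y) \<le> norm (\<alpha> + \<beta> * rpow (dist x y) r)"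
    using assms(4) by (intro AE_I2) (metis abs_ge_self order.trans real_norm_def)
qed

lemma Prob_r_integrable_dist_powr_diff:
  fixes M :: "'a::metric_space measure"
  assumes "M \<in> Prob_r (p - 1)" "1 \<le> p"
  shows "integrable M (\<lambda>y. dist a y powr p - dist b y powr p)"
  using assms dist_powr_diff_abs_le[OF assms(2), of a _ b]
  by (intro Prob_r_integrable_growth[where x = b] continuous_intros continuous_on_powr_const) auto

lemma tendsto_of_approximations:
  fixes a :: "nat \<Rightarrow> real"
  assumes "\<And>e. 0 < e \<Longrightarrow> \<exists>b c b\<^sub>0 c\<^sub>0. b \<longlonglongrightarrow> b\<^sub>0 \<and> c \<longlonglongrightarrow> c\<^sub>0 \<and>
      (\<forall>n. \<bar>a n - b n\<bar> \<le> c n) \<and> \<bar>l - b\<^sub>0\<bar> \<le> c\<^sub>0 \<and> c\<^sub>0 < e"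
  shows "a \<longlonglongrightarrow> l"
proof (rule LIMSEQ_I)
  fix e :: real
  assume "0 < e"
  then obtain b c b\<^sub>0 c\<^sub>0 where b: "b \<longlonglongrightarrow> b\<^sub>0" and c: "c \<longlonglongrightarrow> c\<^sub>0"
    and approx: "\<And>n. \<bar>a n - b n\<bar> \<le> c n" "\<bar>l - b\<^sub>0\<bar> \<le> c\<^sub>0" "c\<^sub>0 < e / 4"
    using assms[of "e / 4"] by auto
  have "eventually (\<lambda>n. dist (b n) b\<^sub>0 < e / 4) sequentially"
    using tendstoD[OF b, of "e / 4"] \<open>0 < e\<close> by simp
  moreover have "eventually (\<lambda>n. c n < c\<^sub>0 + e / 4) sequentially"
    using order_tendstoD(2)[OF c] \<open>0 < e\<close> by simp
  ultimately have "eventually (\<lambda>n. \<bar>b n - b\<^sub>0\<bar> < e / 4 \<and> c n < c\<^sub>0 + e / 4) sequentially"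
    by (auto simp: dist_real_def elim: eventually_elim2)
  then obtain N where N: "\<And>n. N \<le> n \<Longrightarrow> \<bar>b n - b\<^sub>0\<bar> < e / 4 \<and> c n < c\<^sub>0 + e / 4"
    by (auto simp: eventually_sequentially)
  show "\<exists>N. \<forall>n\<ge>N. norm (a n - l) < e"
  proof (intro exI allI impI)
    fix n
    assume "N \<le> n"
    then show "norm (a n - l) < e"
      using N[of n] approx(1)[of n] approx(2,3) unfolding real_norm_def by arith
  qed
qed

lemma integral_clamp_error_le:
  fixes f G :: "'a \<Rightarrow> real"
  assumes f: "integrable N f" and G: "integrable N G" and fG: "\<And>y. \<bar>f y\<bar> \<le> G y" and K: "0 \<le> K"
  shows "\<bar>integral\<^sup>L N f - integral\<^sup>L N (\<lambda>y. max (- K) (min K (f y)))\<bar>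
    \<le> integral\<^sup>L N (\<lambda>y. max 0 (G y - K))"
proof -
  have clamp: "integrable N (\<lambda>y. max (- K) (min K (f y)))"
    using f K by (intro Bochner_Integration.integrable_bound[OF f]) auto
  have excess: "integrable N (\<lambda>y. max 0 (G y - K))"
    using G K fG[THEN order_trans[OF abs_ge_zero]]
    by (intro Bochner_Integration.integrable_bound[OF G]) auto
  have "integral\<^sup>L N f - integral\<^sup>L N (\<lambda>y. max (- K) (min K (f y)))
      = integral\<^sup>L N (\<lambda>y. f y - max (- K) (min K (f y)))"
    using f clamp by simp
  also have "\<bar>\<dots>\<bar> \<le> integral\<^sup>L N (\<lambda>y. \<bar>f y - max (- K) (min K (f y))\<bar>)"
    by (rule integral_abs_bound)
  also have "\<dots> \<le> integral\<^sup>L N (\<lambda>y. max 0 (G y - K))"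
  proof (rule integral_mono)
    show "\<bar>f y - max (- K) (min K (f y))\<bar> \<le> max 0 (G y - K)" for y
      using fG[of y] by (auto simp: abs_le_iff max_def min_def)
  qed (use f clamp excess in auto)
  finally show ?thesis .
qed

lemma integral_excess_tendsto_zero:
  fixes G :: "'a \<Rightarrow> real"
  assumes G: "integrable N G"
  shows "(\<lambda>m. integral\<^sup>L N (\<lambda>y. max 0 (G y - real m))) \<longlonglongrightarrow> 0"
proof -
  have "(\<lambda>m. integral\<^sup>L N (\<lambda>y. max 0 (G y - real m))) \<longlonglongrightarrow> integral\<^sup>L N (\<lambda>y. 0)"
  proof (rule integral_dominated_convergence[where w = "\<lambda>y. \<bar>G y\<bar>"])
    show "AE y in N. (\<lambda>m. max 0 (G y - real m)) \<longlonglongrightarrow> 0"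
    proof (rule AE_I2)
      fix y
      obtain m\<^sub>0 :: nat where "G y \<le> real m\<^sub>0"
        using real_arch_simple by blast
      then have "eventually (\<lambda>m. max 0 (G y - real m) = 0) sequentially"
        unfolding eventually_sequentially by (intro exI[of _ m\<^sub>0]) auto
      then show "(\<lambda>m. max 0 (G y - real m)) \<longlonglongrightarrow> 0"
        by (rule tendsto_eventually)
    qed
  qed (use G in auto)
  then show ?thesis
    by simp
qed

lemma conv_wr_bounded_continuous_tendsto:
  fixes f :: "'a::metric_space \<Rightarrow> real"
  assumes "conv_wr r Ms M" "continuous_on UNIV f" "bounded (range f)"
  shows "(\<lambda>n. integral\<^sup>L (Ms n) f) \<longlonglongrightarrow> integral\<^sup>L M f"
  using assms unfolding conv_wr_def by blast

lemma conv_wr_integral_growth_tendsto: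
  fixes Ms :: "nat \<Rightarrow> 'a::metric_space measure"
  assumes conv: "conv_wr r Ms M" and r: "0 \<le> r" and Ms: "\<And>n. Ms n \<in> Prob_r r" and M: "M \<in> Prob_r r"
  shows "(\<lambda>n. integral\<^sup>L (Ms n) (\<lambda>y. \<alpha> + \<beta> * rpow (dist x y) r))
    \<longlonglongrightarrow> integral\<^sup>L M (\<lambda>y. \<alpha> + \<beta> * rpow (dist x y) r)"
proof -
  have integral_eq: "integral\<^sup>L N (\<lambda>y. \<alpha> + \<beta> * rpow (dist x y) r)
      = \<alpha> + \<beta> * integral\<^sup>L N (\<lambda>y. rpow (dist x y) r)" if N: "N \<in> Prob_r r" for N
  proof -
    interpret prob_space N
      using Prob_rD[OF N] by blast
    show ?thesis
      using Prob_r_integrable_rpow_dist[OF N r] by (simp add: prob_space)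
  qed
  show ?thesis
    using conv unfolding integral_eq[OF Ms] integral_eq[OF M] conv_wr_def
    by (intro tendsto_intros) auto
qed

lemma conv_wr_integral_excess_tendsto:
  fixes Ms :: "nat \<Rightarrow> 'a::metric_space measure"
  assumes conv: "conv_wr r Ms M" and r: "0 \<le> r" and Ms: "\<And>n. Ms n \<in> Prob_r r" and M: "M \<in> Prob_r r"
    and nonneg: "\<And>y. 0 \<le> \<alpha> + \<beta> * rpow (dist x y) r" and K: "0 \<le> K"
  shows "(\<lambda>n. integral\<^sup>L (Ms n) (\<lambda>y. max 0 (\<alpha> + \<beta> * rpow (dist x y) r - K)))
    \<longlonglongrightarrow> integral\<^sup>L M (\<lambda>y. max 0 (\<alpha> + \<beta> * rpow (dist x y) r - K))"
proof -
  define G where "G y = \<alpha> + \<beta> * rpow (dist x y) r" for y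
  have G_cont: "continuous_on UNIV G"
    unfolding G_def using r by (intro continuous_intros continuous_on_rpow) auto
  have G_nonneg: "0 \<le> G y" for y
    using nonneg by (simp add: G_def)
  have excess_eq: "integral\<^sup>L N (\<lambda>y. max 0 (G y - K)) = integral\<^sup>L N G - integral\<^sup>L N (\<lambda>y. min (G y) K)"
    if N: "N \<in> Prob_r r" for N
  proof -
    have G_integrable: "integrable N G"
      using N r G_cont nonneg by (intro Prob_r_integrable_growth[where x = x]) (auto simp: G_def)
    moreover have "integrable N (\<lambda>y. min (G y) K)"
      using G_nonneg K borel_measurable_integrable[OF G_integrable]
      by (intro Bochner_Integration.integrable_bound[OF G_integrable]) auto
    moreover have "(\<lambda>y. max 0 (G y - K)) = (\<lambda>y. G y - min (G y) K)"
      by (auto simp: fun_eq_iff)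
    ultimately show ?thesis
      by simp
  qed
  have "(\<lambda>n. integral\<^sup>L (Ms n) (\<lambda>y. min (G y) K)) \<longlonglongrightarrow> integral\<^sup>L M (\<lambda>y. min (G y) K)"
    using G_cont G_nonneg K
    by (intro conv_wr_bounded_continuous_tendsto[OF conv] continuous_intros)
      (auto simp: bounded_iff intro!: exI[of _ K])
  moreover have "(\<lambda>n. integral\<^sup>L (Ms n) G) \<longlonglongrightarrow> integral\<^sup>L M G"
    unfolding G_def by (rule conv_wr_integral_growth_tendsto[OF conv r Ms M])
  ultimately show ?thesis
    unfolding G_def[symmetric] excess_eq[OF Ms] excess_eq[OF M] by (intro tendsto_diff)
qed

lemma conv_wr_integral_tendsto:
  fixes Ms :: "nat \<Rightarrow> 'a::metric_space measure" and f :: "'a \<Rightarrow> real"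
  assumes conv: "conv_wr r Ms M" and r: "0 \<le> r"
    and Ms: "\<And>n. Ms n \<in> Prob_r r" and M: "M \<in> Prob_r r"
    and f: "continuous_on UNIV f" and growth: "\<And>y. \<bar>f y\<bar> \<le> \<alpha> + \<beta> * rpow (dist x y) r"
  shows "(\<lambda>n. integral\<^sup>L (Ms n) f) \<longlonglongrightarrow> integral\<^sup>L M f"
proof (rule tendsto_of_approximations)
  define G where "G y = \<alpha> + \<beta> * rpow (dist x y) r" for y
  have f_le_G: "\<bar>f y\<bar> \<le> G y" for y
    using growth by (simp add: G_def)
  then have G_nonneg: "0 \<le> G y" for y
    using abs_ge_zero order_trans by blast
  have G_cont: "continuous_on UNIV G"
    unfolding G_def using r by (intro continuous_intros continuous_on_rpow) auto
  have integrable: "integrable N f" "integrable N G" if "N \<in> Prob_r r" for N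
    using Prob_r_integrable_growth[OF that r f growth]
      Prob_r_integrable_growth[OF that r G_cont, of \<alpha> \<beta> x] G_nonneg
    by (auto simp: G_def)
  have clamp_error: "\<bar>integral\<^sup>L N f - integral\<^sup>L N (\<lambda>y. max (- K) (min K (f y)))\<bar>
      \<le> integral\<^sup>L N (\<lambda>y. max 0 (G y - K))" if "N \<in> Prob_r r" "0 \<le> K" for N K
    using integrable[OF that(1)] f_le_G that(2) by (intro integral_clamp_error_le)
  fix e :: real
  assume "0 < e"
  obtain m :: nat where m: "integral\<^sup>L M (\<lambda>y. max 0 (G y - real m)) < e"
    using order_tendstoD(2)[OF integral_excess_tendsto_zero[OF integrable(2)[OF M]] \<open>0 < e\<close>]
    by (auto simp: eventually_sequentially)
  show "\<exists>b c b\<^sub>0 c\<^sub>0. b \<longlonglongrightarrow> b\<^sub>0 \<and> c \<longlonglongrightarrow> c\<^sub>0 \<and>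
      (\<forall>n. \<bar>integral\<^sup>L (Ms n) f - b n\<bar> \<le> c n) \<and> \<bar>integral\<^sup>L M f - b\<^sub>0\<bar> \<le> c\<^sub>0 \<and> c\<^sub>0 < e"
  proof (intro exI conjI allI)
    show "(\<lambda>n. integral\<^sup>L (Ms n) (\<lambda>y. max (- real m) (min (real m) (f y))))
        \<longlonglongrightarrow> integral\<^sup>L M (\<lambda>y. max (- real m) (min (real m) (f y)))"
      using f by (intro conv_wr_bounded_continuous_tendsto[OF conv] continuous_intros)
        (auto simp: bounded_iff intro!: exI[of _ "real m"])
    show "(\<lambda>n. integral\<^sup>L (Ms n) (\<lambda>y. max 0 (G y - real m))) \<longlonglongrightarrow> integral\<^sup>L M (\<lambda>y. max 0 (G y - real m))"
      using conv_wr_integral_excess_tendsto[OF conv r Ms M] G_nonneg unfolding G_def by simp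
  qed (use clamp_error Ms M m in auto)
qed

section \<open>Limits of approximate p-means\<close>

lemma conv_wr_subseq:
  assumes "conv_wr r Ms M" "strict_mono s"
  shows "conv_wr r (Ms \<circ> s) M"
  using assms LIMSEQ_subseq_LIMSEQ unfolding conv_wr_def comp_def by blast

lemma Wp_add:
  fixes N :: "'a::metric_space measure"
  assumes "N \<in> Prob_r (p - 1)" "1 \<le> p"
  shows "Wp N p a b + Wp N p b c = Wp N p a c"
  using Prob_r_integrable_dist_powr_diff[OF assms] unfolding Wp_def
  by (subst Bochner_Integration.integral_add[symmetric]) auto

lemma Wp_abs_le:
  fixes N :: "'a::metric_space measure"
  assumes N: "N \<in> Prob_r (p - 1)" and p: "1 \<le> p"
  shows "\<bar>Wp N p a b\<bar> \<le> p * 2 powr (p - 1) * dist a b powr p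
    + p * (1 + 2 powr (p - 1)) * dist a b * integral\<^sup>L N (\<lambda>y. rpow (dist b y) (p - 1))"
proof -
  interpret prob_space N
    using Prob_rD[OF N] by blast
  have rpow_integrable: "integrable N (\<lambda>y. rpow (dist b y) (p - 1))"
    using Prob_r_integrable_rpow_dist[OF N] p by simp
  have "\<bar>Wp N p a b\<bar> \<le> integral\<^sup>L N (\<lambda>y. \<bar>dist a y powr p - dist b y powr p\<bar>)"
    unfolding Wp_def by (rule integral_abs_bound)
  also have "\<dots> \<le> integral\<^sup>L N (\<lambda>y. p * 2 powr (p - 1) * dist a b powr p
      + p * (1 + 2 powr (p - 1)) * dist a b * rpow (dist b y) (p - 1))"
    using Prob_r_integrable_dist_powr_diff[OF N p] rpow_integrable dist_powr_diff_abs_le[OF p]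
    by (intro integral_mono) auto
  also have "\<dots> = p * 2 powr (p - 1) * dist a b powr p
      + p * (1 + 2 powr (p - 1)) * dist a b * integral\<^sup>L N (\<lambda>y. rpow (dist b y) (p - 1))"
    using rpow_integrable by (simp add: prob_space)
  finally show ?thesis .
qed

lemma Wp_tendsto:
  fixes Ms :: "nat \<Rightarrow> 'a::metric_space measure"
  assumes "conv_wr (p - 1) Ms M" "\<And>n. Ms n \<in> Prob_r (p - 1)" "M \<in> Prob_r (p - 1)" "1 \<le> p"
  shows "(\<lambda>n. Wp (Ms n) p a b) \<longlonglongrightarrow> Wp M p a b"
  unfolding Wp_def using assms dist_powr_diff_abs_le[OF assms(4), of a _ b]
  by (intro conv_wr_integral_tendsto[where x = b] continuous_intros continuous_on_powr_const) auto

lemma tendsto_Mp: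
  fixes Ms :: "nat \<Rightarrow> 'a::metric_space measure"
  assumes p: "1 \<le> p" and Ms: "\<And>n. Ms n \<in> Prob_r (p - 1)" and M: "M \<in> Prob_r (p - 1)"
    and conv: "conv_wr (p - 1) Ms M" and eps: "eps \<longlonglongrightarrow> 0"
    and xs: "\<And>n. xs n \<in> Mp_eps (Ms n) p (eps n)" and lim: "xs \<longlonglongrightarrow> z"
  shows "z \<in> Mp M p"
  unfolding Mp_def Mp_eps_def
proof (intro CollectI allI)
  fix x'
  define \<delta> where "\<delta> n = dist (xs n) z" for n
  define bound where "bound n = eps n + p * 2 powr (p - 1) * \<delta> n powr p
    + p * (1 + 2 powr (p - 1)) * \<delta> n * integral\<^sup>L (Ms n) (\<lambda>y. rpow (dist z y) (p - 1))" for n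
  have \<delta>: "\<delta> \<longlonglongrightarrow> 0"
    using lim unfolding \<delta>_def by (rule tendsto_dist_iff[THEN iffD1])
  have "(\<lambda>n. integral\<^sup>L (Ms n) (\<lambda>y. rpow (dist z y) (p - 1)))
      \<longlonglongrightarrow> integral\<^sup>L M (\<lambda>y. rpow (dist z y) (p - 1))"
    using conv unfolding conv_wr_def by blast
  then have bound: "bound \<longlonglongrightarrow> 0 + p * 2 powr (p - 1) * 0
      + p * (1 + 2 powr (p - 1)) * 0 * integral\<^sup>L M (\<lambda>y. rpow (dist z y) (p - 1))"
    unfolding bound_def using p
    by (intro tendsto_intros eps tendsto_zero_powrI \<delta>) (auto simp: \<delta>_def)
  have Wp_le_bound: "Wp (Ms n) p z x' \<le> bound n" for n
  proof -
    have "Wp (Ms n) p z x' = Wp (Ms n) p (xs n) x' - Wp (Ms n) p (xs n) z"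
      using Wp_add[OF Ms p, of n "xs n" z x'] by simp
    moreover have "Wp (Ms n) p (xs n) x' \<le> eps n"
      using xs[of n] unfolding Mp_eps_def by blast
    ultimately show ?thesis
      using Wp_abs_le[OF Ms p, of n "xs n" z] unfolding bound_def \<delta>_def by linarith
  qed
  show "Wp M p z x' \<le> 0"
    using LIMSEQ_le[OF Wp_tendsto[OF conv Ms M p] bound] Wp_le_bound by auto
qed

section \<open>Boundedness of approximate p-means\<close>

(* The cut-off factor is continuous, so convergence in tau_w^r applies to the tail weight. *)
definition tail_weight :: "real \<Rightarrow> 'a::metric_space \<Rightarrow> real \<Rightarrow> 'a \<Rightarrow> real" where
  "tail_weight r z R y = min 1 (max 0 (dist z y / R - 1)) * (1 + rpow (dist z y) r)"

lemma continuous_on_tail_weight: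
  assumes "0 \<le> r"
  shows "continuous_on UNIV (tail_weight r z R)"
proof (cases "R = 0")
  case True
  then show ?thesis
    by (simp add: tail_weight_def)
next
  case False
  then show ?thesis
    unfolding tail_weight_def using assms by (intro continuous_intros continuous_on_rpow) auto
qed

lemma tail_weight_le: "\<bar>tail_weight r z R y\<bar> \<le> 1 + 1 * rpow (dist z y) r"
  unfolding tail_weight_def by (auto simp: rpow_nonneg abs_mult intro!: mult_left_le_one_le)

lemma conv_wr_uniform_tail:
  fixes Ms :: "nat \<Rightarrow> 'a::metric_space measure"
  assumes conv: "conv_wr r Ms M" and r: "0 \<le> r"
    and Ms: "\<And>n. Ms n \<in> Prob_r r" and M: "M \<in> Prob_r r" and "0 < \<eta>"
  obtains R where "0 < R" "eventually (\<lambda>n. integral\<^sup>L (Ms n) (tail_weight r z R) < \<eta>) sequentially"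
proof -
  interpret prob_space M
    using Prob_rD[OF M] by blast
  have "(\<lambda>m. integral\<^sup>L M (tail_weight r z (real m + 1))) \<longlonglongrightarrow> integral\<^sup>L M (\<lambda>y. 0)"
  proof (rule integral_dominated_convergence[where w = "\<lambda>y. 1 + 1 * rpow (dist z y) r"])
    show "integrable M (\<lambda>y. 1 + 1 * rpow (dist z y) r)"
      using Prob_r_integrable_rpow_dist[OF M r] by auto
    show "tail_weight r z (real m + 1) \<in> borel_measurable M" for m
      using Prob_rD(2)[OF M] continuous_on_tail_weight[OF r]
      by (rule borel_measurable_continuous_on_sets_borel)
    show "AE y in M. (\<lambda>m. tail_weight r z (real m + 1) y) \<longlonglongrightarrow> 0"
    proof (rule AE_I2)
      fix y
      obtain m\<^sub>0 :: nat where "dist z y \<le> real m\<^sub>0"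
        using real_arch_simple by blast
      then have "eventually (\<lambda>m. tail_weight r z (real m + 1) y = 0) sequentially"
        unfolding eventually_sequentially tail_weight_def
        by (intro exI[of _ m\<^sub>0]) (auto simp: field_simps)
      then show "(\<lambda>m. tail_weight r z (real m + 1) y) \<longlonglongrightarrow> 0"
        by (rule tendsto_eventually)
    qed
    show "AE y in M. norm (tail_weight r z (real m + 1) y) \<le> 1 + 1 * rpow (dist z y) r" for m
      using tail_weight_le by (intro AE_I2) simp
  qed simp
  then obtain m where m: "integral\<^sup>L M (tail_weight r z (real m + 1)) < \<eta>"
    using order_tendstoD(2) \<open>0 < \<eta>\<close> by (fastforce simp: eventually_sequentially)
  have "(\<lambda>n. integral\<^sup>L (Ms n) (tail_weight r z (real m + 1))) \<longlonglongrightarrow> integral\<^sup>L M (tail_weight r z (real m + 1))"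
    by (rule conv_wr_integral_tendsto[OF conv r Ms M continuous_on_tail_weight[OF r] tail_weight_le])
  then show ?thesis
    using that[of "real m + 1"] order_tendstoD(2) m by auto
qed

lemma dist_powr_diff_ge_tangent:
  fixes x z y :: "'a::metric_space"
  assumes p: "1 \<le> p"
  shows "- (p * dist x z * rpow (dist z y) (p - 1)) \<le> dist x y powr p - dist z y powr p"
proof -
  have "- dist x z \<le> dist x y - dist z y"
    by metric
  then have "p * rpow (dist z y) (p - 1) * (- dist x z) \<le> p * rpow (dist z y) (p - 1) * (dist x y - dist z y)"
    using p by (intro mult_left_mono) (auto simp: rpow_nonneg)
  also have "\<dots> \<le> dist x y powr p - dist z y powr p"
    using p by (intro powr_ge_tangent) auto
  finally show ?thesis
    by (simp add: algebra_simps)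
qed

lemma dist_powr_diff_ge_near:
  fixes x z y :: "'a::metric_space"
  assumes p: "1 \<le> p" and far: "2 * R + 1 \<le> dist x z" and near: "dist z y < 2 * R"
  shows "dist x z - (2 * R + (2 * R) powr p) \<le> dist x y powr p - dist z y powr p"
proof -
  have "dist x z - 2 * R \<le> dist x y"
    using near by metric
  then have "dist x y powr 1 \<le> dist x y powr p"
    using far p by (intro powr_mono) auto
  moreover have "dist z y powr p \<le> (2 * R) powr p"
    using near p by (intro powr_mono2) auto
  ultimately show ?thesis
    using \<open>dist x z - 2 * R \<le> dist x y\<close> far by auto
qed

lemma dist_powr_diff_ge_tail:
  fixes x z y :: "'a::metric_space"
  assumes p: "1 \<le> p" and R: "0 < R" and far: "2 * R + 1 \<le> dist x z"
  shows "dist x z - (2 * R + (2 * R) powr p) - 2 * p * dist x z * tail_weight (p - 1) z R y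
    \<le> dist x y powr p - dist z y powr p"
proof -
  define D c where "D = dist x z" and "c = 2 * R + (2 * R) powr p"
  define t T where "t = min 1 (max 0 (dist z y / R - 1))" and "T = 1 + rpow (dist z y) (p - 1)"
  have t: "0 \<le> t" "t \<le> 1"
    by (auto simp: t_def)
  have "1 \<le> p * T"
    using p mult_mono[of 1 p 1 T] by (auto simp: T_def rpow_nonneg)
  moreover have "0 \<le> c"
    using R by (simp add: c_def)
  ultimately have "D - c \<le> p * D * T"
    using mult_left_mono[of 1 "p * T" D] by (simp add: D_def algebra_simps)
  have "p * D * rpow (dist z y) (p - 1) \<le> p * D * T"
    using p by (intro mult_left_mono) (auto simp: D_def T_def)
  then have tangent: "- (p * D * T) \<le> dist x y powr p - dist z y powr p"
    using dist_powr_diff_ge_tangent[OF p, of x z y] unfolding D_def by linarith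
  have "D - c - 2 * p * D * (t * T) \<le> dist x y powr p - dist z y powr p"
  proof (cases "dist z y < 2 * R")
    case False
    then have "t = 1"
      using R by (auto simp: t_def field_simps)
    then show ?thesis
      using tangent \<open>D - c \<le> p * D * T\<close> by simp
  next
    case True
    then have "(1 - t) * (D - c) + t * (- (p * D * T))
        \<le> (1 - t) * (dist x y powr p - dist z y powr p) + t * (dist x y powr p - dist z y powr p)"
      using dist_powr_diff_ge_near[OF p far True] tangent t
      by (intro add_mono mult_left_mono) (auto simp: D_def c_def)
    moreover have "t * (D - c) \<le> t * (p * D * T)"
      using t \<open>D - c \<le> p * D * T\<close> by (intro mult_left_mono) auto
    ultimately show ?thesis
      by (simp add: algebra_simps)
  qed
  then show ?thesis
    by (simp add: tail_weight_def D_def c_def t_def T_def)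
qed

lemma Wp_ge_tail:
  fixes N :: "'a::metric_space measure"
  assumes N: "N \<in> Prob_r (p - 1)" and p: "1 \<le> p" and R: "0 < R" and far: "2 * R + 1 \<le> dist x z"
  shows "dist x z - (2 * R + (2 * R) powr p) - 2 * p * dist x z * integral\<^sup>L N (tail_weight (p - 1) z R)
    \<le> Wp N p x z"
proof -
  interpret prob_space N
    using Prob_rD[OF N] by blast
  have tail_integrable: "integrable N (tail_weight (p - 1) z R)"
    using p by (intro Prob_r_integrable_growth[OF N _ continuous_on_tail_weight tail_weight_le]) auto
  then have "dist x z - (2 * R + (2 * R) powr p) - 2 * p * dist x z * integral\<^sup>L N (tail_weight (p - 1) z R)
      = integral\<^sup>L N (\<lambda>y. dist x z - (2 * R + (2 * R) powr p) - 2 * p * dist x z * tail_weight (p - 1) z R y)"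
    by (simp add: prob_space)
  also have "\<dots> \<le> Wp N p x z"
    unfolding Wp_def using tail_integrable Prob_r_integrable_dist_powr_diff[OF N p]
      dist_powr_diff_ge_tail[OF p R far]
    by (intro integral_mono) auto
  finally show ?thesis .
qed

lemma bdd_above_dist_approx_minimizers:
  fixes Ms :: "nat \<Rightarrow> 'a::metric_space measure"
  assumes p: "1 \<le> p" and Ms: "\<And>n. Ms n \<in> Prob_r (p - 1)" and M: "M \<in> Prob_r (p - 1)"
    and conv: "conv_wr (p - 1) Ms M" and eps: "eps \<longlonglongrightarrow> 0"
    and xs: "\<And>n. xs n \<in> Mp_eps (Ms n) p (eps n)"
  shows "bdd_above (range (\<lambda>n. dist (xs n) z))"
proof -
  obtain R where R: "0 < R"
    and tail: "eventually (\<lambda>n. integral\<^sup>L (Ms n) (tail_weight (p - 1) z R) < 1 / (4 * p)) sequentially"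
    using conv_wr_uniform_tail[OF conv _ Ms M, of "1 / (4 * p)" z] p by auto
  define c where "c = 2 * R + (2 * R) powr p"
  have "eventually (\<lambda>n. dist (xs n) z \<le> max (2 * R + 1) (2 * c + 2)) sequentially"
    using tail order_tendstoD(2)[OF eps zero_less_one]
  proof eventually_elim
    case (elim n)
    show ?case
    proof (rule ccontr)
      define D where "D = dist (xs n) z"
      assume "\<not> dist (xs n) z \<le> max (2 * R + 1) (2 * c + 2)"
      then have far: "2 * R + 1 \<le> D" and big: "2 * c + 2 < D"
        by (auto simp: D_def)
      have "D - c - 2 * p * D * integral\<^sup>L (Ms n) (tail_weight (p - 1) z R) \<le> Wp (Ms n) p (xs n) z"
        using Wp_ge_tail[OF Ms p R far[unfolded D_def]] by (simp add: D_def c_def)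
      also have "\<dots> \<le> eps n"
        using xs[of n] by (simp add: Mp_eps_def)
      also have "\<dots> < 1"
        using elim by simp
      moreover have "2 * p * D * integral\<^sup>L (Ms n) (tail_weight (p - 1) z R) \<le> 2 * p * D * (1 / (4 * p))"
        using elim p far R by (intro mult_left_mono) auto
      ultimately show False
        using big p by (simp add: field_simps)
    qed
  qed
  then show ?thesis
    by (intro Bseq_bdd_above BfunI) simp
qed

section \<open>Continuous lower approximation of Lipschitz functions\<close>

lemma continuous_on_Max_atMost:
  fixes g :: "nat \<Rightarrow> 'a::topological_space \<Rightarrow> real"
  assumes "\<And>k. continuous_on S (g k)"
  shows "continuous_on S (\<lambda>y. Max ((\<lambda>k. g k y) ` {..m}))"
proof (induction m)
  case 0
  then show ?case
    using assms by simp
next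
  case (Suc m)
  have "(\<lambda>y. Max ((\<lambda>k. g k y) ` {..Suc m})) = (\<lambda>y. max (g (Suc m) y) (Max ((\<lambda>k. g k y) ` {..m})))"
    by (simp add: atMost_Suc)
  then show ?case
    by (simp only:) (intro continuous_on_max assms Suc.IH)
qed

lemma separable_space_dense_seq:
  assumes "separable_space (euclidean :: 'a topology)"
  obtains cc :: "nat \<Rightarrow> 'a::metric_space" where "\<And>y e. 0 < e \<Longrightarrow> \<exists>k. dist (cc k) y < e"
proof -
  obtain C :: "'a set" where C: "countable C" "closure C = UNIV"
    using assms unfolding separable_space_def by auto
  then have "C \<noteq> {}"
    by auto
  have "\<exists>k. dist (from_nat_into C k) y < e" if "0 < e" for y e
  proof -
    obtain c where "c \<in> C" "dist c y < e"
      using C(2) \<open>0 < e\<close> closure_approachable by blast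
    then show ?thesis
      using range_from_nat_into[OF \<open>C \<noteq> {}\<close> C(1)] by (metis rangeE)
  qed
  then show ?thesis
    using that by blast
qed

(* The shift by 1/(m+1) makes lower_approx eventually lie below every f_n with
   liminf f_n >= h, uniformly in the argument (see eventually_lower_approx_le). *)
definition lower_approx :: "(nat \<Rightarrow> 'a::metric_space) \<Rightarrow> ('a \<Rightarrow> real) \<Rightarrow> ('a \<Rightarrow> real) \<Rightarrow> nat \<Rightarrow> 'a \<Rightarrow> real" where
  "lower_approx cc l h m y = max (l y) (Max ((\<lambda>k. h (cc k) - dist (cc k) y) ` {..m}) - 1 / (real m + 1))"

lemma continuous_on_lower_approx:
  "continuous_on UNIV l \<Longrightarrow> continuous_on UNIV (lower_approx cc l h m)"
  unfolding lower_approx_def by (intro continuous_intros continuous_on_Max_atMost)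

lemma lower_approx_le:
  assumes "\<And>c y. h c \<le> h y + dist c y" "\<And>y. l y \<le> h y"
  shows "lower_approx cc l h m y \<le> h y"
proof -
  have "Max ((\<lambda>k. h (cc k) - dist (cc k) y) ` {..m}) \<le> h y"
    using assms(1)[of _ y] by (simp add: algebra_simps)
  moreover have "0 \<le> 1 / (real m + 1)"
    by simp
  ultimately show ?thesis
    unfolding lower_approx_def using assms(2)[of y] by (intro max.boundedI) linarith+
qed

lemma lower_approx_tendsto:
  assumes dense: "\<And>y e. 0 < e \<Longrightarrow> \<exists>k. dist (cc k) y < e"
    and lip: "\<And>c y. h c \<le> h y + dist c y" and l: "\<And>y. l y \<le> h y"
  shows "(\<lambda>m. lower_approx cc l h m y) \<longlonglongrightarrow> h y"
proof (rule LIMSEQ_I)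
  fix e :: real
  assume "0 < e"
  then obtain k where k: "dist (cc k) y < e / 4"
    using dense[of "e / 4"] by auto
  obtain N :: nat where N: "1 / (real N + 1) < e / 2"
    using \<open>0 < e\<close> by (metis add.commute half_gt_zero_iff nat_approx_posE of_nat_Suc)
  have le: "lower_approx cc l h m y \<le> h y" for m
    using lip l by (rule lower_approx_le)
  have close: "h y - e < lower_approx cc l h m y" if "max k N \<le> m" for m
  proof -
    have "1 / (real m + 1) \<le> 1 / (real N + 1)"
      using that by (intro divide_left_mono) auto
    moreover have "h (cc k) - dist (cc k) y \<le> Max ((\<lambda>k. h (cc k) - dist (cc k) y) ` {..m})"
      using that by (intro Max_ge) auto
    moreover have "h y \<le> h (cc k) + dist (cc k) y"
      using lip[of y "cc k"] by (simp add: dist_commute)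
    ultimately show ?thesis
      using k N by (simp add: lower_approx_def less_max_iff_disj)
  qed
  show "\<exists>N. \<forall>m\<ge>N. norm (lower_approx cc l h m y - h y) < e"
  proof (intro exI allI impI)
    fix m
    assume "max k N \<le> m"
    then show "norm (lower_approx cc l h m y - h y) < e"
      using close[of m] le[of m] by simp
  qed
qed

lemma eventually_lower_approx_le:
  assumes l: "\<And>n y. l y \<le> f n y" and lip: "\<And>n c y. f n c \<le> f n y + dist c y"
    and above: "\<And>c \<delta>. 0 < \<delta> \<Longrightarrow> eventually (\<lambda>n. h c - \<delta> < f n c) sequentially"
  shows "eventually (\<lambda>n. \<forall>y. lower_approx cc l h m y \<le> f n y) sequentially"
proof -
  have "eventually (\<lambda>n. \<forall>k\<in>{..m}. h (cc k) - 1 / (real m + 1) < f n (cc k)) sequentially"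
    by (intro eventually_ball_finite ballI above) auto
  then show ?thesis
  proof eventually_elim
    case (elim n)
    have "h (cc k) - dist (cc k) y - 1 / (real m + 1) \<le> f n y" if "k \<le> m" for k y
      using elim lip[of n "cc k" y] that by force
    then show ?case
      unfolding lower_approx_def using l by (auto intro!: max.boundedI simp: diff_le_eq)
  qed
qed

section \<open>Distances to a weak limit\<close>

(* Junk value 0 where the liminf is infinite; all lemmas assume a bounded sequence. *)
definition liminf_dist :: "(nat \<Rightarrow> 'a::metric_space) \<Rightarrow> 'a \<Rightarrow> real" where
  "liminf_dist zs y = real_of_ereal (liminf (\<lambda>n. ereal (dist (zs n) y)))"

context
  fixes zs :: "nat \<Rightarrow> 'a::metric_space" and x :: 'a and D :: real
  assumes bounded: "\<And>n. dist (zs n) x \<le> D"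
begin

lemma liminf_dist_le_ereal: "liminf (\<lambda>n. ereal (dist (zs n) y)) \<le> ereal (D + dist x y)"
proof -
  have "liminf (\<lambda>n. ereal (dist (zs n) y)) \<le> liminf (\<lambda>n. ereal (D + dist x y))"
  proof (intro Liminf_mono always_eventually allI)
    fix n
    show "ereal (dist (zs n) y) \<le> ereal (D + dist x y)"
      using bounded[of n] dist_triangle[of "zs n" y x] by simp
  qed
  then show ?thesis
    by (simp add: Liminf_const)
qed

lemma liminf_dist_ereal: "liminf (\<lambda>n. ereal (dist (zs n) y)) = ereal (liminf_dist zs y)"
proof -
  have "0 \<le> liminf (\<lambda>n. ereal (dist (zs n) y))"
    by (intro Liminf_bounded always_eventually) simp
  then show ?thesis
    using liminf_dist_le_ereal[of y] unfolding liminf_dist_def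
    by (cases "liminf (\<lambda>n. ereal (dist (zs n) y))") auto
qed

lemma liminf_dist_le: "liminf_dist zs y \<le> D + dist x y"
  using liminf_dist_le_ereal[of y] by (simp add: liminf_dist_ereal)

lemma liminf_dist_lipschitz: "liminf_dist zs c \<le> liminf_dist zs y + dist c y"
proof -
  have "liminf (\<lambda>n. ereal (dist (zs n) c)) \<le> liminf (\<lambda>n. ereal (dist (zs n) y) + ereal (dist c y))"
    by (intro Liminf_mono always_eventually allI) (simp add: dist_triangle2)
  also have "\<dots> = liminf (\<lambda>n. ereal (dist (zs n) y)) + ereal (dist c y)"
    by (rule Liminf_add_ereal_right) auto
  finally show ?thesis
    by (simp add: liminf_dist_ereal)
qed

lemma eventually_liminf_dist_less:
  assumes "0 < \<delta>"
  shows "eventually (\<lambda>n. liminf_dist zs c - \<delta> < dist (zs n) c) sequentially"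
proof -
  have "ereal (liminf_dist zs c - \<delta>) < liminf (\<lambda>n. ereal (dist (zs n) c))"
    using assms by (simp add: liminf_dist_ereal)
  from less_LiminfD[OF this] show ?thesis
    by simp
qed

end

lemma integral_nonpos_below_Wp_integrand:
  fixes Ms :: "nat \<Rightarrow> 'a::metric_space measure" and \<phi> :: "'a \<Rightarrow> real"
  assumes p: "1 \<le> p" and Ms: "\<And>n. Ms n \<in> Prob_r (p - 1)" and M: "M \<in> Prob_r (p - 1)"
    and conv: "conv_wr (p - 1) Ms M" and eps: "eps \<longlonglongrightarrow> 0"
    and zs: "\<And>n. zs n \<in> Mp_eps (Ms n) p (eps n)"
    and \<phi>: "continuous_on UNIV \<phi>" and growth: "\<And>y. \<bar>\<phi> y\<bar> \<le> \<alpha> + \<beta> * rpow (dist x y) (p - 1)"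
    and below: "eventually (\<lambda>n. \<forall>y. \<phi> y \<le> dist (zs n) y powr p - dist x y powr p) sequentially"
  shows "integral\<^sup>L M \<phi> \<le> 0"
proof (rule tendsto_le[OF trivial_limit_sequentially eps])
  show "(\<lambda>n. integral\<^sup>L (Ms n) \<phi>) \<longlonglongrightarrow> integral\<^sup>L M \<phi>"
    using p by (intro conv_wr_integral_tendsto[OF conv _ Ms M \<phi> growth]) auto
  show "eventually (\<lambda>n. integral\<^sup>L (Ms n) \<phi> \<le> eps n) sequentially"
    using below
  proof eventually_elim
    case (elim n)
    have "integral\<^sup>L (Ms n) \<phi> \<le> Wp (Ms n) p (zs n) x"
      unfolding Wp_def using elim p
      by (intro integral_mono Prob_r_integrable_growth[OF Ms _ \<phi> growth]
          Prob_r_integrable_dist_powr_diff[OF Ms p]) auto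
    also have "\<dots> \<le> eps n"
      using zs[of n] by (auto simp: Mp_eps_def)
    finally show ?case .
  qed
qed

lemma integral_nonpos_limit:
  fixes \<psi> :: "nat \<Rightarrow> 'a \<Rightarrow> real"
  assumes measurable: "\<And>m. \<psi> m \<in> borel_measurable M" and w: "integrable M w"
    and dominated: "\<And>m y. \<bar>\<psi> m y\<bar> \<le> w y" and lim: "\<And>y. (\<lambda>m. \<psi> m y) \<longlonglongrightarrow> \<phi> y"
    and nonpos: "\<And>m. integral\<^sup>L M (\<psi> m) \<le> 0"
  shows "integrable M \<phi>" "integral\<^sup>L M \<phi> \<le> 0"
proof -
  have \<phi>: "\<phi> \<in> borel_measurable M"
    using lim measurable by (rule borel_measurable_LIMSEQ_real)
  have "AE y in M. (\<lambda>m. \<psi> m y) \<longlonglongrightarrow> \<phi> y" "\<And>m. AE y in M. norm (\<psi> m y) \<le> w y"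
    using lim dominated by simp_all
  from integrable_dominated_convergence[OF \<phi> measurable w this]
    integral_dominated_convergence[OF \<phi> measurable w this]
  show "integrable M \<phi>" "integral\<^sup>L M \<phi> \<le> 0"
    using nonpos by (auto intro: LIMSEQ_le_const2)
qed

lemma (in prob_space) integral_nonpos_obtain_zero:
  fixes \<phi> :: "'a \<Rightarrow> real"
  assumes "integrable M \<phi>" "\<And>y. 0 \<le> \<phi> y" "integral\<^sup>L M \<phi> \<le> 0"
  obtains y where "\<phi> y = 0"
proof -
  have "0 \<le> integral\<^sup>L M \<phi>"
    using assms(2) by (intro Bochner_Integration.integral_nonneg_AE AE_I2) auto
  then have "integral\<^sup>L M \<phi> = 0"
    using assms(3) by simp
  then have "AE y in M. \<phi> y = 0"
    using integral_nonneg_eq_0_iff_AE[OF assms(1)] assms(2) by simp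
  then show ?thesis
    using that AE_const by (metis (mono_tags) eventually_mono)
qed

lemma liminf_dist_lower_approx:
  fixes zs :: "nat \<Rightarrow> 'a::metric_space"
  assumes sep: "separable_space (euclidean :: 'a topology)"
    and bounded: "\<And>n. dist (zs n) x \<le> D" and lower: "\<And>y. dist x y \<le> liminf_dist zs y"
  obtains a where "\<And>m. continuous_on UNIV (a m)" "\<And>m y. 0 \<le> a m y" "\<And>m y. \<bar>a m y - dist x y\<bar> \<le> D"
    "\<And>y. (\<lambda>m. a m y) \<longlonglongrightarrow> liminf_dist zs y"
    "\<And>m. eventually (\<lambda>n. \<forall>y. a m y \<le> dist (zs n) y) sequentially"
proof -
  obtain cc :: "nat \<Rightarrow> 'a" where dense: "\<And>y e. 0 < e \<Longrightarrow> \<exists>k. dist (cc k) y < e"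
    using separable_space_dense_seq[OF sep] by blast
  define h where "h = liminf_dist zs"
  define l where "l y = max 0 (dist x y - D)" for y
  have h_lip: "h c \<le> h y + dist c y" for c y
    unfolding h_def by (rule liminf_dist_lipschitz[of zs x D, OF bounded])
  have "0 \<le> D"
    using bounded[of 0] zero_le_dist[of "zs 0" x] by linarith
  then have l_le_h: "l y \<le> h y" for y
    using lower[of y] order_trans[OF zero_le_dist lower[of y]] by (simp add: l_def h_def)
  have "0 \<le> lower_approx cc l h m y" "\<bar>lower_approx cc l h m y - dist x y\<bar> \<le> D" for m y
  proof -
    have "0 \<le> l y" "dist x y - D \<le> l y" "l y \<le> lower_approx cc l h m y"
      by (simp_all add: l_def lower_approx_def)
    moreover have "h y \<le> D + dist x y"
      unfolding h_def by (rule liminf_dist_le[of zs x D, OF bounded])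
    ultimately show "0 \<le> lower_approx cc l h m y" "\<bar>lower_approx cc l h m y - dist x y\<bar> \<le> D"
      using lower_approx_le[OF h_lip l_le_h, of cc m y] by (simp_all add: abs_le_iff)
  qed
  moreover have "continuous_on UNIV (lower_approx cc l h m)" for m
    unfolding l_def by (intro continuous_on_lower_approx continuous_intros)
  moreover have "l y \<le> dist (zs n) y" for n y
    using bounded[of n] dist_triangle[of x y "zs n"] by (simp add: l_def dist_commute)
  then have "eventually (\<lambda>n. \<forall>y. lower_approx cc l h m y \<le> dist (zs n) y) sequentially" for m
    unfolding h_def using eventually_liminf_dist_less[of zs x D, OF bounded]
    by (intro eventually_lower_approx_le) (auto simp: dist_triangle2)
  ultimately show ?thesis
    using that[of "lower_approx cc l h"] lower_approx_tendsto[OF dense h_lip l_le_h] by (auto simp: h_def)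
qed

lemma ex_liminf_dist_eq_dist:
  fixes Ms :: "nat \<Rightarrow> 'a::metric_space measure"
  assumes sep: "separable_space (euclidean :: 'a topology)"
    and p: "1 \<le> p" and Ms: "\<And>n. Ms n \<in> Prob_r (p - 1)" and M: "M \<in> Prob_r (p - 1)"
    and conv: "conv_wr (p - 1) Ms M" and eps: "eps \<longlonglongrightarrow> 0"
    and zs: "\<And>n. zs n \<in> Mp_eps (Ms n) p (eps n)"
    and bounded: "\<And>n. dist (zs n) x \<le> D" and lower: "\<And>y. dist x y \<le> liminf_dist zs y"
  shows "\<exists>y. liminf_dist zs y = dist x y"
proof -
  interpret prob_space M
    using Prob_rD[OF M] by blast
  obtain a where a_cont: "\<And>m. continuous_on UNIV (a m)" and a_nonneg: "\<And>m y. 0 \<le> a m y"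
    and a_close: "\<And>m y. \<bar>a m y - dist x y\<bar> \<le> D"
    and a_lim: "\<And>y. (\<lambda>m. a m y) \<longlonglongrightarrow> liminf_dist zs y"
    and a_below: "\<And>m. eventually (\<lambda>n. \<forall>y. a m y \<le> dist (zs n) y) sequentially"
    using liminf_dist_lower_approx[OF sep bounded lower] by blast
  define \<psi> where "\<psi> m y = a m y powr p - dist x y powr p" for m y
  define w where "w y = p * 2 powr (p - 1) * D powr p + p * (1 + 2 powr (p - 1)) * D * rpow (dist x y) (p - 1)" for y
  have \<psi>_cont: "continuous_on UNIV (\<psi> m)" for m
    unfolding \<psi>_def using p a_nonneg by (intro continuous_intros continuous_on_powr_const a_cont) auto
  have \<psi>_le_w: "\<bar>\<psi> m y\<bar> \<le> w y" for m y
    unfolding \<psi>_def w_def using a_nonneg a_close p by (intro powr_diff_abs_le_growth) auto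
  have \<psi>_nonpos: "integral\<^sup>L M (\<psi> m) \<le> 0" for m
  proof (rule integral_nonpos_below_Wp_integrand[OF p Ms M conv eps zs \<psi>_cont])
    show "\<bar>\<psi> m y\<bar> \<le> p * 2 powr (p - 1) * D powr p + p * (1 + 2 powr (p - 1)) * D * rpow (dist x y) (p - 1)" for y
      using \<psi>_le_w by (simp add: w_def)
    show "eventually (\<lambda>n. \<forall>y. \<psi> m y \<le> dist (zs n) y powr p - dist x y powr p) sequentially"
      using a_below[of m] by eventually_elim (use p a_nonneg in \<open>auto simp: \<psi>_def intro!: powr_mono2\<close>)
  qed
  have \<psi>_lim: "(\<lambda>m. \<psi> m y) \<longlonglongrightarrow> liminf_dist zs y powr p - dist x y powr p" for y
    unfolding \<psi>_def using p a_nonneg by (intro tendsto_intros tendsto_powr2 a_lim) auto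
  have \<psi>_measurable: "\<psi> m \<in> borel_measurable M" for m
    using Prob_rD(2)[OF M] \<psi>_cont by (rule borel_measurable_continuous_on_sets_borel)
  have w_integrable: "integrable M w"
    unfolding w_def using Prob_r_integrable_rpow_dist[OF M] p by simp
  note limit = integral_nonpos_limit[OF \<psi>_measurable w_integrable \<psi>_le_w \<psi>_lim \<psi>_nonpos]
  have "0 \<le> liminf_dist zs y powr p - dist x y powr p" for y
    using lower[of y] p by (simp add: powr_mono2)
  then obtain y where "liminf_dist zs y powr p = dist x y powr p"
    using integral_nonpos_obtain_zero[OF limit(1) _ limit(2)] by (metis eq_iff_diff_eq_0)
  then show ?thesis
    using lower[of y] p powr_less_mono2[of p "dist x y" "liminf_dist zs y"]
    by (metis less_eq_real_def less_irrefl zero_le_dist zero_less_one less_le_trans)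
qed

lemma is_weak_convergenceD:
  fixes w :: "(nat \<Rightarrow> 'a::metric_space) \<Rightarrow> 'a \<Rightarrow> bool"
  assumes "is_weak_convergence w"
  shows weak_convergence_subseq: "w xs x \<Longrightarrow> strict_mono s \<Longrightarrow> w (xs \<circ> s) x"
    and weak_convergence_bounded_subseq:
      "bdd_above (range (\<lambda>n. dist (xs n) y)) \<Longrightarrow> \<exists>s x. strict_mono s \<and> w (xs \<circ> s) x"
    and weak_convergence_dist_le_liminf:
      "w xs x \<Longrightarrow> ereal (dist x y) \<le> liminf (\<lambda>n. ereal (dist (xs n) y))"
    and weak_convergence_dist_tendsto:
      "w xs x \<Longrightarrow> (\<lambda>n. dist (xs n) y) \<longlonglongrightarrow> dist x y \<Longrightarrow> (\<lambda>n. dist (xs n) x) \<longlonglongrightarrow> 0"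
  using assms unfolding is_weak_convergence_def is_convergence_def by metis+

lemma weak_convergence_subseq_tendsto:
  assumes w: "is_weak_convergence w" and lim: "w zs x"
    and liminf: "liminf (\<lambda>n. ereal (dist (zs n) y)) = ereal (dist x y)"
  obtains t where "strict_mono t" "(zs \<circ> t) \<longlonglongrightarrow> x"
proof -
  obtain t where t: "strict_mono t"
    and "((\<lambda>n. ereal (dist (zs n) y)) \<circ> t) \<longlonglongrightarrow> liminf (\<lambda>n. ereal (dist (zs n) y))"
    using liminf_subseq_lim by blast
  then have "(\<lambda>n. dist ((zs \<circ> t) n) y) \<longlonglongrightarrow> dist x y"
    unfolding liminf by (simp add: comp_def)
  then have "(\<lambda>n. dist ((zs \<circ> t) n) x) \<longlonglongrightarrow> 0"
    using weak_convergence_dist_tendsto[OF w weak_convergence_subseq[OF w lim t]] by blast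
  then show ?thesis
    using that t tendsto_dist_iff by blast
qed

lemma approx_minimizers_weak_limit_subseq_tendsto:
  fixes Ms :: "nat \<Rightarrow> 'a::metric_space measure"
  assumes sep: "separable_space (euclidean :: 'a topology)" and w: "is_weak_convergence w"
    and p: "1 \<le> p" and Ms: "\<And>n. Ms n \<in> Prob_r (p - 1)" and M: "M \<in> Prob_r (p - 1)"
    and conv: "conv_wr (p - 1) Ms M" and eps: "eps \<longlonglongrightarrow> 0"
    and zs: "\<And>n. zs n \<in> Mp_eps (Ms n) p (eps n)" and lim: "w zs x"
  obtains t where "strict_mono t" "(zs \<circ> t) \<longlonglongrightarrow> x"
proof -
  obtain D where bounded: "\<And>n. dist (zs n) x \<le> D"
    using bdd_above_dist_approx_minimizers[OF p Ms M conv eps zs, of x] by (auto simp: bdd_above_def)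
  have "dist x y \<le> liminf_dist zs y" for y
    using weak_convergence_dist_le_liminf[OF w lim] liminf_dist_ereal[of zs x D, OF bounded]
    by simp
  then obtain y where "liminf_dist zs y = dist x y"
    using ex_liminf_dist_eq_dist[OF sep p Ms M conv eps zs bounded] by blast
  then show ?thesis
    using weak_convergence_subseq_tendsto[OF w lim] liminf_dist_ereal[of zs x D, OF bounded] that
    by metis
qed

lemma approx_minimizers_subseq_tendsto:
  fixes Ms :: "nat \<Rightarrow> 'a::metric_space measure" and w :: "(nat \<Rightarrow> 'a) \<Rightarrow> 'a \<Rightarrow> bool"
  assumes sep: "separable_space (euclidean :: 'a topology)" and w: "is_weak_convergence w"
    and p: "1 \<le> p" and Ms: "\<And>n. Ms n \<in> Prob_r (p - 1)" and M: "M \<in> Prob_r (p - 1)"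
    and conv: "conv_wr (p - 1) Ms M" and eps: "eps \<longlonglongrightarrow> 0"
    and xs: "\<And>n. xs n \<in> Mp_eps (Ms n) p (eps n)"
  obtains t z where "strict_mono t" "(xs \<circ> t) \<longlonglongrightarrow> z"
proof -
  obtain t x where t: "strict_mono t" and lim: "w (xs \<circ> t) x"
    using weak_convergence_bounded_subseq[OF w bdd_above_dist_approx_minimizers[OF p Ms M conv eps xs]]
    by blast
  have "conv_wr (p - 1) (Ms \<circ> t) M" "(eps \<circ> t) \<longlonglongrightarrow> 0"
    using conv_wr_subseq[OF conv t] LIMSEQ_subseq_LIMSEQ[OF eps t] by auto
  with Ms xs obtain t' where "strict_mono t'" "(xs \<circ> t \<circ> t') \<longlonglongrightarrow> x"
    using approx_minimizers_weak_limit_subseq_tendsto[OF sep w p _ M _ _ _ lim, of "Ms \<circ> t" "eps \<circ> t"]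
    by (auto simp: comp_def)
  then show ?thesis
    using that strict_mono_o[OF t] by (metis o_assoc)
qed

theorem theorem3p8:
  fixes Ms :: "nat \<Rightarrow> 'a::metric_space measure" and M :: "'a measure"
    and p :: real and eps :: "nat \<Rightarrow> real" and xs :: "nat \<Rightarrow> 'a"
  assumes "separable_space (euclidean :: 'a topology)"
    and "admits_weak_convergence TYPE('a)"
    and "p \<ge> 1"
    and "\<And>n. Ms n \<in> Prob_r (p - 1)" and "M \<in> Prob_r (p - 1)"
    and "conv_wr (p - 1) Ms M"
    and "\<And>n. eps n \<ge> 0" and "eps \<longlonglongrightarrow> 0"
    and "\<And>n. xs n \<in> Mp_eps (Ms n) p (eps n)"
  shows "(\<forall>s::nat \<Rightarrow> nat. strict_mono s \<longrightarrow>
            (\<exists>(t::nat \<Rightarrow> nat) z. strict_mono t \<and> (xs \<circ> s \<circ> t) \<longlonglongrightarrow> z)) \<and>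
         (\<forall>(s::nat \<Rightarrow> nat) z. strict_mono s \<and> (xs \<circ> s) \<longlonglongrightarrow> z \<longrightarrow> z \<in> Mp M p)"
proof -
  obtain w :: "(nat \<Rightarrow> 'a) \<Rightarrow> 'a \<Rightarrow> bool" where w: "is_weak_convergence w"
    using assms(2) unfolding admits_weak_convergence_def by blast
  have sub: "conv_wr (p - 1) (Ms \<circ> s) M" "(eps \<circ> s) \<longlonglongrightarrow> 0" "\<And>n. (Ms \<circ> s) n \<in> Prob_r (p - 1)"
    "\<And>n. (xs \<circ> s) n \<in> Mp_eps ((Ms \<circ> s) n) p ((eps \<circ> s) n)" if "strict_mono s" for s :: "nat \<Rightarrow> nat"
    using conv_wr_subseq[OF assms(6) that] LIMSEQ_subseq_LIMSEQ[OF assms(8) that] assms(4,9) by auto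
  show ?thesis
  proof (intro conjI allI impI)
    fix s :: "nat \<Rightarrow> nat"
    assume "strict_mono s"
    from approx_minimizers_subseq_tendsto[OF assms(1) w assms(3) sub(3)[OF this] assms(5)
        sub(1,2,4)[OF this]]
    show "\<exists>t z. strict_mono t \<and> (xs \<circ> s \<circ> t) \<longlonglongrightarrow> z"
      by blast
  next
    fix s z
    assume "strict_mono s \<and> (xs \<circ> s) \<longlonglongrightarrow> z"
    then show "z \<in> Mp M p"
      using tendsto_Mp[OF assms(3) sub(3) assms(5) sub(1,2,4)] by blast
  qed
qed

end
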